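(* Let $a<b$ and let $f,g:[a,b]\to\mathbb{R}$ be differentiable on $[a,b]$ (one-sided derivatives at the endpoints), and suppose $f$ and $g$ are twice differentiable at the point $a$ (from the right). Suppose $g(a)\neq g(b)$ and put $K=\frac{f(b)-f(a)}{g(b)-g(a)}$. If $$\bigl[f'(a)-K\,g'(a)\bigr]\cdot\bigl[f''(a)-K\,g''(a)\bigr]> 0,$$ then there exists $\xi\in(a,b)$ such that $$f'(a)-\frac{f(\xi)-f(a)}{\xi-a}=K\left[g'(a)-\frac{g(\xi)-g(a)}{\xi-a}\right].$$
   Context: Differentiability on a closed interval $[a,b]$ means differentiability on $(a,b)$ together with existence of the one-sided derivatives at $a$ and $b$. *)

theory Defs
  imports "HOL-Analysis.Analysis"
begin

end

theory Submission
  imports Defs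
begin

text \<open>
  With \<open>h = f - K g\<close> we have \<open>h a = h b\<close>, and the claim says that \<open>h'(a)\<close> is the slope of
  a secant of \<open>h\<close> through \<open>a\<close>. Replacing \<open>h\<close> by \<open>-h\<close> if necessary, \<open>h'(a) > 0\<close> and
  \<open>h''(a) > 0\<close>. Then \<open>h'\<close> exceeds \<open>h'(a)\<close> just to the right of \<open>a\<close>, so by the mean value
  theorem some secant slope from \<open>a\<close> exceeds \<open>h'(a)\<close>, whereas the secant slope at \<open>b\<close> is
  \<open>0 < h'(a)\<close>. The intermediate value theorem yields a secant slope equal to \<open>h'(a)\<close>.
\<close>

lemma secant_slope_gt_deriv_right:
  fixes h h' :: "real \<Rightarrow> real" and h2 a b :: real
  assumes "a < b"
    and dh: "\<And>x. x \<in> {a..b} \<Longrightarrow> (h has_real_derivative h' x) (at x within {a..b})"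
    and dh2: "(h' has_real_derivative h2) (at a within {a..b})"
    and "0 < h2"
  shows "\<exists>x\<in>{a<..<b}. h' a < (h x - h a) / (x - a)"
proof -
  obtain d where "d > 0" and inc: "\<And>e. 0 < e \<Longrightarrow> a + e \<in> {a..b} \<Longrightarrow> e < d \<Longrightarrow> h' a < h' (a + e)"
    using has_real_derivative_pos_inc_right[OF dh2 \<open>0 < h2\<close>] by blast
  define x where "x = min (a + d/2) ((a + b)/2)"
  have x: "a < x" "x < b" "x - a < d"
    using \<open>a < b\<close> \<open>d > 0\<close> unfolding x_def by (auto simp: min_def)
  have "\<exists>t\<in>{a<..<x}. h x - h a = (\<lambda>u. h' t * u) (x - a)"
  proof (rule mvt_simple[OF \<open>a < x\<close>])
    fix u assume "a \<le> u" "u \<le> x"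
    then have "(h has_real_derivative h' u) (at u within {a..x})"
      using x by (intro has_field_derivative_subset[OF dh]) auto
    then show "(h has_derivative (\<lambda>v. h' u * v)) (at u within {a..x})"
      by (simp add: has_field_derivative_def)
  qed
  then obtain t where t: "a < t" "t < x" and mvt: "h x - h a = h' t * (x - a)"
    by auto
  have "h' a < h' t"
    using inc[of "t - a"] t x by auto
  then have "h' a < (h x - h a) / (x - a)"
    using mvt x by (simp add: pos_less_divide_eq mult.commute)
  with x show ?thesis by auto
qed

lemma deriv_eq_secant_slope_pos:
  fixes h h' :: "real \<Rightarrow> real" and h2 a b :: real
  assumes "a < b"
    and dh: "\<And>x. x \<in> {a..b} \<Longrightarrow> (h has_real_derivative h' x) (at x within {a..b})"
    and dh2: "(h' has_real_derivative h2) (at a within {a..b})"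
    and "h b = h a" and "0 < h' a" and "0 < h2"
  shows "\<exists>\<xi>\<in>{a<..<b}. h' a = (h \<xi> - h a) / (\<xi> - a)"
proof -
  define slope where "slope x = (h x - h a) / (x - a)" for x
  obtain x where x: "a < x" "x < b" and "h' a < slope x"
    using secant_slope_gt_deriv_right[OF \<open>a < b\<close> dh dh2 \<open>0 < h2\<close>]
    unfolding slope_def by auto
  moreover have "slope b = 0"
    unfolding slope_def using \<open>h b = h a\<close> by simp
  moreover have "continuous_on {x..b} slope"
  proof -
    have "continuous_on {x..b} h"
      using DERIV_continuous_on[OF dh] by (rule continuous_on_subset) (use x in auto)
    then show ?thesis
      unfolding slope_def using x by (intro continuous_intros) auto
  qed
  ultimately obtain \<xi> where \<xi>: "x \<le> \<xi>" "\<xi> \<le> b" "slope \<xi> = h' a"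
    using IVT2'[of slope b "h' a" x] \<open>0 < h' a\<close> by force
  have "\<xi> \<noteq> b"
    using \<xi>(3) \<open>slope b = 0\<close> \<open>0 < h' a\<close> by auto
  with \<xi> x show ?thesis
    unfolding slope_def by (intro bexI[of _ \<xi>]) auto
qed

lemma deriv_eq_secant_slope:
  fixes h h' :: "real \<Rightarrow> real" and h2 a b :: real
  assumes "a < b"
    and dh: "\<And>x. x \<in> {a..b} \<Longrightarrow> (h has_real_derivative h' x) (at x within {a..b})"
    and dh2: "(h' has_real_derivative h2) (at a within {a..b})"
    and "h b = h a" and "0 < h' a * h2"
  shows "\<exists>\<xi>\<in>{a<..<b}. h' a = (h \<xi> - h a) / (\<xi> - a)"
proof (cases "0 < h' a")
  case True
  then have "0 < h2"
    using \<open>0 < h' a * h2\<close> by (simp add: zero_less_mult_iff)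
  with True show ?thesis
    using deriv_eq_secant_slope_pos[OF \<open>a < b\<close> dh dh2 \<open>h b = h a\<close>] by blast
next
  case False
  then have "0 < - h' a" "0 < - h2"
    using \<open>0 < h' a * h2\<close> by (auto simp: zero_less_mult_iff)
  moreover have "\<And>x. x \<in> {a..b} \<Longrightarrow> ((\<lambda>x. - h x) has_real_derivative - h' x) (at x within {a..b})"
    using dh by (rule DERIV_minus)
  moreover have "((\<lambda>x. - h' x) has_real_derivative - h2) (at a within {a..b})"
    using dh2 by (rule DERIV_minus)
  ultimately obtain \<xi> where "\<xi> \<in> {a<..<b}" "- h' a = (- h \<xi> - - h a) / (\<xi> - a)"
    using deriv_eq_secant_slope_pos[of a b "\<lambda>x. - h x" "\<lambda>x. - h' x" "- h2"] \<open>a < b\<close> \<open>h b = h a\<close>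
    by auto
  then show ?thesis
    by (intro bexI[of _ \<xi>]) (auto simp: field_simps)
qed

theorem mainTheorem3:
  fixes f g f' g' :: "real \<Rightarrow> real" and f2 g2 a b :: real
  assumes "a < b"
    and "\<And>x. x \<in> {a..b} \<Longrightarrow> (f has_real_derivative f' x) (at x within {a..b})"
    and "\<And>x. x \<in> {a..b} \<Longrightarrow> (g has_real_derivative g' x) (at x within {a..b})"
    and "(f' has_real_derivative f2) (at a within {a..b})"
    and "(g' has_real_derivative g2) (at a within {a..b})"
    and "g a \<noteq> g b"
    and "(f' a - ((f b - f a) / (g b - g a)) * g' a) * (f2 - ((f b - f a) / (g b - g a)) * g2) > 0"
  shows "\<exists>\<xi>\<in>{a<..<b}. f' a - (f \<xi> - f a) / (\<xi> - a)
           = ((f b - f a) / (g b - g a)) * (g' a - (g \<xi> - g a) / (\<xi> - a))"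
proof -
  define K where "K = (f b - f a) / (g b - g a)"
  have hb: "f b - K * g b = f a - K * g a"
    using assms(6) unfolding K_def by (simp add: field_simps)
  have dh: "\<And>x. x \<in> {a..b} \<Longrightarrow>
      ((\<lambda>x. f x - K * g x) has_real_derivative f' x - K * g' x) (at x within {a..b})"
    using assms(2,3) by (auto intro!: derivative_eq_intros)
  have dh2: "((\<lambda>x. f' x - K * g' x) has_real_derivative f2 - K * g2) (at a within {a..b})"
    using assms(4,5) by (auto intro!: derivative_eq_intros)
  obtain \<xi> where "\<xi> \<in> {a<..<b}"
      and "f' a - K * g' a = ((f \<xi> - K * g \<xi>) - (f a - K * g a)) / (\<xi> - a)"
    using deriv_eq_secant_slope[OF assms(1) dh dh2 hb] assms(7) unfolding K_def by blast
  then show ?thesis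
    unfolding K_def[symmetric]
    by (intro bexI[of _ \<xi>]) (auto simp: field_simps)
qed

end
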